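(* Let $N\in\mathbb{N}$ with $N\ge3$, $s\in\mathbb{N}$, and $n\in\mathbb{N}$ with $n\ge4s^2$. Then there is a real $E$ with $|E|\le 1.5\,s^{\frac{N+3}{2}}\cosh\left(2\pi\sqrt{\frac s3}\right)n^{-\frac{N+2}{2}}$ such that \[ e^{2\pi\sqrt{\frac{n+s}{3}}}=e^{2\pi\sqrt{\frac n3}}\left(\sum_{m=0}^{N+1}\frac{d^{[1]}_s(m)}{n^{\frac m2}}+E\right). \]
   Context: For $m\in\mathbb{N}_0$: $e^{[1]}_s(0):=1$, $e^{[1]}_s(m):=\frac{s^m(2m-1)!}{(-4)^m}\sum_{\nu=1}^{m}\frac{(-4\pi^2s/3)^\nu}{(2\nu-1)!(\nu+m)!(m-\nu)!}$ for $m\ge1$; $o^{[1]}_s(m):=\frac{\pi s^{m+1}(2m)!}{\sqrt3(-4)^m}\sum_{\nu=0}^{m}\frac{(-4\pi^2s/3)^\nu}{(2\nu)!(m-\nu)!(\nu+m+1)!}$; $d^{[1]}_s(2m):=e^{[1]}_s(m)$, $d^{[1]}_s(2m+1):=o^{[1]}_s(m)$. *)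

theory Defs
  imports "HOL-Analysis.Analysis"
begin

definition e1 :: "nat \<Rightarrow> nat \<Rightarrow> real" where
  "e1 s m = (if m = 0 then 1 else
     (real s ^ m * fact (2*m - 1) / (-4) ^ m) *
     (\<Sum>\<nu>=1..m. (-4 * pi^2 * real s / 3) ^ \<nu> /
        (fact (2*\<nu> - 1) * fact (\<nu> + m) * fact (m - \<nu>))))"

definition o1 :: "nat \<Rightarrow> nat \<Rightarrow> real" where
  "o1 s m = (pi * real s ^ (m+1) * fact (2*m) / (sqrt 3 * (-4) ^ m)) *
     (\<Sum>\<nu>=0..m. (-4 * pi^2 * real s / 3) ^ \<nu> /
        (fact (2*\<nu>) * fact (m - \<nu>) * fact (\<nu> + m + 1)))"

definition d1 :: "nat \<Rightarrow> nat \<Rightarrow> real" where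
  "d1 s m = (if even m then e1 s (m div 2) else o1 s (m div 2))"

end

(*
  Put X = sqrt (s / n) and b = 2 pi sqrt (s / 3). Then sqrt (n + s) = sqrt n + sqrt s g(X) with
  g(X) = (sqrt (1 + X^2) - 1) / X, so the quotient of the two exponentials is exp (b g(X)).
  Since g^2 = 1 - (2/X) g, the powers of g satisfy a three-term recurrence, which identifies
  g(X)^k = sum_j (-1)^j k/(k+2j) binom(k+2j, j) (X/2)^(k+2j). These coefficients are at most 1/2
  in absolute value, so for X <= 1/2 cutting each g^k off below degree M costs at most (2/3) X^M,
  and cutting exp (b g(X)) = sum_k b^k g(X)^k / k! off costs at most (2/3) X^M e^b, which is
  below (4/3) X^M cosh b. The coefficient of X^m in the truncated series is d_s(m) n^(-m/2).
*)

theory Submission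
  imports Defs
begin

definition gfun :: "real \<Rightarrow> real" where
  "gfun X = (sqrt (1 + X^2) - 1) / X"

lemma gfun_square:
  assumes "X \<noteq> 0"
  shows "gfun X ^ 2 = 1 - 2 / X * gfun X"
proof -
  have "sqrt (1 + X^2) ^ 2 = 1 + X^2"
    by simp
  then show ?thesis
    using assms by (simp add: gfun_def field_simps power2_eq_square)
qed

lemma sqrt_add_eq_gfun:
  assumes "0 < x" "0 < y"
  shows "sqrt (x + y) = sqrt x + sqrt y * gfun (sqrt (y / x))"
proof -
  have "sqrt (1 + (sqrt (y / x))^2) = sqrt (x + y) / sqrt x"
    using assms by (simp add: field_simps real_sqrt_divide[symmetric])
  then have "gfun (sqrt (y / x)) = (sqrt (x + y) - sqrt x) / sqrt y"
    using assms by (simp add: gfun_def real_sqrt_divide field_simps)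
  then show ?thesis
    using assms by simp
qed

text \<open>\<open>ballot 0 0\<close> is set to 1, not 0, so that \<open>gfun_pow_coeff 0\<close> below describes \<open>gfun X ^ 0 = 1\<close>.\<close>

definition ballot :: "nat \<Rightarrow> nat \<Rightarrow> real" where
  "ballot k j = (if k + 2*j = 0 then 1 else real k / real (k + 2*j) * real ((k + 2*j) choose j))"

lemma ballot_0_right [simp]: "ballot k 0 = 1"
  by (simp add: ballot_def)

lemma ballot_nonneg: "ballot k j \<ge> 0"
  by (simp add: ballot_def)

lemma ballot_fact:
  assumes "k + 2*j > 0"
  shows "ballot k j = real k * fact (k + 2*j - 1) / (fact j * fact (k + j))"
proof -
  have "real ((k + 2*j) choose j) = fact (k + 2*j) / (fact j * fact (k + 2*j - j))"
    by (rule binomial_fact) simp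
  then have "real ((k + 2*j) choose j) = fact (k + 2*j) / (fact j * fact (k + j))"
    by (simp add: add.commute)
  moreover have "(fact (k + 2*j) :: real) = real (k + 2*j) * fact (k + 2*j - 1)"
    using assms by (simp add: fact_reduce)
  ultimately show ?thesis
    using assms by (simp add: ballot_def)
qed

lemma ballot_Suc_Suc: "ballot (Suc k) (Suc j) = ballot k (Suc j) + ballot (k + 2) j"
proof -
  define m where "m = k + 2*j + 1"
  define F A B where "F = (fact m :: real)" and "A = (fact j :: real)" and "B = (fact (k + j + 1) :: real)"
  define J K where "J = real j + 1" and "K = real k + real j + 2"
  have pos: "F > 0" "A > 0" "B > 0" "J > 0" "K > 0"
    by (simp_all add: F_def A_def B_def J_def K_def)
  have "ballot (Suc k) (Suc j) = (real k + 1) * (real m + 1) * F / ((J * A) * (K * B))"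
    by (simp add: ballot_fact m_def F_def A_def B_def J_def K_def algebra_simps)
  also have "(real k + 1) * (real m + 1) = real k * K + (real k + 2) * J"
    by (simp add: m_def J_def K_def algebra_simps)
  also have "(real k * K + (real k + 2) * J) * F / ((J * A) * (K * B)) =
      real k * F / ((J * A) * B) + (real k + 2) * F / (A * (K * B))"
    using pos by (simp add: field_simps)
  also have "real k * F / ((J * A) * B) = ballot k (Suc j)"
    by (simp add: ballot_fact m_def F_def A_def B_def J_def algebra_simps)
  also have "(real k + 2) * F / (A * (K * B)) = ballot (k + 2) j"
    by (simp add: ballot_fact m_def F_def A_def B_def K_def algebra_simps)
  finally show ?thesis .
qed

lemma ballot_le:
  assumes "k + 2*j > 0"
  shows "2 * ballot k j \<le> 2 ^ (k + 2*j)"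
proof (cases "k = 0")
  case True
  with assms show ?thesis by (simp add: ballot_def)
next
  case False
  define m where "m = k + 2*j"
  have "ballot k j \<le> real (m choose j)"
    using False by (simp add: ballot_def m_def field_simps)
  moreover have "2 * (m choose j) \<le> 2 ^ m"
  proof -
    have "(m choose j) + (m choose (m - j)) = (\<Sum>i\<in>{j, m - j}. m choose i)"
      using False by (simp add: m_def)
    also have "\<dots> \<le> (\<Sum>i\<le>m. m choose i)"
      by (rule sum_mono2) (auto simp: m_def)
    also have "\<dots> = 2 ^ m"
      by (rule choose_row_sum)
    finally show ?thesis
      using binomial_symmetric[of j m] by (simp add: m_def)
  qed
  then have "2 * real (m choose j) \<le> 2 ^ m"
    by (metis of_nat_le_iff of_nat_mult of_nat_numeral of_nat_power)
  ultimately show ?thesis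
    by (simp add: m_def)
qed

definition gfun_pow_coeff :: "nat \<Rightarrow> nat \<Rightarrow> real" where
  "gfun_pow_coeff k j = (-1) ^ j * ballot k j / 2 ^ (k + 2*j)"

lemma gfun_pow_coeff_0_left: "gfun_pow_coeff 0 j = (if j = 0 then 1 else 0)"
  by (simp add: gfun_pow_coeff_def ballot_def)

lemma gfun_pow_coeff_abs_le_half:
  assumes "k + 2*j > 0"
  shows "\<bar>gfun_pow_coeff k j\<bar> \<le> 1/2"
  using ballot_le[OF assms] ballot_nonneg[of k j] by (simp add: gfun_pow_coeff_def abs_mult field_simps)

lemma gfun_pow_coeff_abs_le_1: "\<bar>gfun_pow_coeff k j\<bar> \<le> 1"
  using gfun_pow_coeff_abs_le_half[of k j] by (cases "k + 2*j = 0") (auto simp: gfun_pow_coeff_def)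

lemma gfun_pow_coeff_Suc_Suc:
  "gfun_pow_coeff k (Suc j) - gfun_pow_coeff (k + 2) j = 2 * gfun_pow_coeff (Suc k) (Suc j)"
proof -
  have "gfun_pow_coeff k (Suc j) - gfun_pow_coeff (k + 2) j =
      (-1) ^ Suc j * (ballot k (Suc j) + ballot (k + 2) j) / 2 ^ (k + 2 * Suc j)"
    by (simp add: gfun_pow_coeff_def field_simps)
  then show ?thesis
    by (simp add: ballot_Suc_Suc gfun_pow_coeff_def field_simps)
qed

lemma gbinomial_half_Suc:
  "((1/2 :: real) gchoose Suc j) = (-1) ^ j * fact (2*j) / (2 ^ (2*j + 1) * fact j * fact (Suc j))"
proof -
  have "pochhammer (- (1/2) :: real) (Suc j) = - (1/2) * pochhammer (1/2) j"
    by (simp add: pochhammer_rec)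
  also have "pochhammer (1/2 :: real) j = fact (2*j) / (2 ^ (2*j) * fact j)"
    using fact_double[of j, where 'a = real] by (simp add: field_simps)
  finally have pochhammer_eq:
    "pochhammer (- (1/2) :: real) (Suc j) = - (1/2) * (fact (2*j) / (2 ^ (2*j) * fact j))" .
  show ?thesis
    unfolding gbinomial_pochhammer pochhammer_eq by (simp add: field_simps)
qed

lemma gfun_pow_coeff_1: "gfun_pow_coeff 1 j = ((1/2 :: real) gchoose Suc j)"
  by (simp add: gfun_pow_coeff_def ballot_fact gbinomial_half_Suc field_simps)

lemma gfun_pow_coeff_div_fact:
  assumes "k > 0"
  shows "gfun_pow_coeff k j / fact k =
    (-1) ^ j * fact (k + 2*j - 1) / (2 ^ (k + 2*j) * fact (k - 1) * fact j * fact (k + j))"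
proof -
  have "(fact k :: real) = real k * fact (k - 1)"
    using assms by (simp add: fact_reduce)
  then show ?thesis
    using assms by (simp add: gfun_pow_coeff_def ballot_fact field_simps)
qed

definition gfun_pow_series :: "nat \<Rightarrow> real \<Rightarrow> real" where
  "gfun_pow_series k X = (\<Sum>j. gfun_pow_coeff k j * X ^ (k + 2*j))"

lemma gfun_pow_series_sums:
  assumes "\<bar>X\<bar> < 1"
  shows "(\<lambda>j. gfun_pow_coeff k j * X ^ (k + 2*j)) sums gfun_pow_series k X"
proof -
  have bound: "norm (gfun_pow_coeff k j * X ^ (k + 2*j)) \<le> \<bar>X\<bar> ^ j" for j
  proof -
    have "norm (gfun_pow_coeff k j * X ^ (k + 2*j)) \<le> 1 * \<bar>X\<bar> ^ (k + 2*j)"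
      unfolding real_norm_def abs_mult power_abs by (intro mult_right_mono gfun_pow_coeff_abs_le_1) simp
    also have "\<dots> \<le> \<bar>X\<bar> ^ j"
      using assms by (simp only: mult_1) (rule power_decreasing; simp)
    finally show ?thesis .
  qed
  have "summable (\<lambda>j. \<bar>X\<bar> ^ j)"
    using assms by (simp add: summable_geometric)
  then have "summable (\<lambda>j. gfun_pow_coeff k j * X ^ (k + 2*j))"
    by (rule summable_comparison_test') (rule bound)
  then show ?thesis
    by (simp add: gfun_pow_series_def summable_sums)
qed

lemma gfun_pow_series_0:
  assumes "\<bar>X\<bar> < 1"
  shows "gfun_pow_series 0 X = 1"
proof -
  have "(\<lambda>j. gfun_pow_coeff 0 j * X ^ (0 + 2*j)) = (\<lambda>j. if j = 0 then 1 else 0)"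
    by (simp add: gfun_pow_coeff_0_left fun_eq_iff)
  then show ?thesis
    using gfun_pow_series_sums[OF assms, of 0] sums_single[of 0 "\<lambda>_. 1 :: real"] sums_unique2 by force
qed

lemma gfun_pow_series_1:
  assumes "\<bar>X\<bar> < 1" "X \<noteq> 0"
  shows "gfun_pow_series 1 X = gfun X"
proof -
  have "\<bar>X^2\<bar> < 1"
    using assms by (simp add: abs_square_less_1)
  from sqrt_series[OF this]
  have "(\<lambda>j. ((1/2) gchoose Suc j) * (X^2) ^ Suc j) sums (sqrt (1 + X^2) - 1)"
    by (subst sums_Suc_iff) simp
  then have "(\<lambda>j. ((1/2) gchoose Suc j) * (X^2) ^ Suc j / X) sums gfun X"
    unfolding gfun_def by (rule sums_divide)
  moreover have "((1/2) gchoose Suc j) * (X^2) ^ Suc j / X = gfun_pow_coeff 1 j * X ^ (1 + 2*j)" for j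
  proof -
    have "(X^2) ^ Suc j = X * X ^ (1 + 2*j)"
      unfolding power_mult[symmetric] by simp
    then show ?thesis
      unfolding gfun_pow_coeff_1 using assms(2) by simp
  qed
  ultimately show ?thesis
    using gfun_pow_series_sums[OF assms(1), of 1] sums_unique2 by force
qed

lemma gfun_pow_series_rec:
  assumes "\<bar>X\<bar> < 1" "X \<noteq> 0"
  shows "gfun_pow_series k X - gfun_pow_series (k + 2) X = 2 / X * gfun_pow_series (Suc k) X"
proof -
  define f where "f j = (if j = 0 then 0 else gfun_pow_coeff (k + 2) (j - 1) * X ^ (k + 2*j))" for j
  have "(\<lambda>j. f (Suc j)) = (\<lambda>j. gfun_pow_coeff (k + 2) j * X ^ (k + 2 + 2*j))"
    by (simp add: f_def algebra_simps)
  then have "(\<lambda>j. f (Suc j)) sums gfun_pow_series (k + 2) X"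
    using gfun_pow_series_sums[OF assms(1), of "k + 2"] by simp
  then have "f sums (gfun_pow_series (k + 2) X + f 0)"
    by (simp only: sums_Suc_iff)
  then have "f sums gfun_pow_series (k + 2) X"
    by (simp add: f_def)
  from sums_diff[OF gfun_pow_series_sums[OF assms(1)] this]
  have "(\<lambda>j. gfun_pow_coeff k j * X ^ (k + 2*j) - f j) sums
      (gfun_pow_series k X - gfun_pow_series (k + 2) X)" .
  moreover have "gfun_pow_coeff k j * X ^ (k + 2*j) - f j =
      2 / X * (gfun_pow_coeff (Suc k) j * X ^ (Suc k + 2*j))" for j
  proof (cases j)
    case 0
    then show ?thesis
      using assms(2) by (simp add: f_def gfun_pow_coeff_def)
  next
    case (Suc i)
    have "gfun_pow_coeff k j * X ^ (k + 2*j) - f j =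
        (gfun_pow_coeff k (Suc i) - gfun_pow_coeff (k + 2) i) * X ^ (k + 2*j)"
      by (simp add: f_def Suc algebra_simps)
    also have "\<dots> = 2 * gfun_pow_coeff (Suc k) (Suc i) * X ^ (k + 2*j)"
      by (simp only: gfun_pow_coeff_Suc_Suc)
    also have "\<dots> = 2 / X * (gfun_pow_coeff (Suc k) j * X ^ (Suc k + 2*j))"
      using assms(2) by (simp add: Suc)
    finally show ?thesis .
  qed
  ultimately have "(\<lambda>j. 2 / X * (gfun_pow_coeff (Suc k) j * X ^ (Suc k + 2*j))) sums
      (gfun_pow_series k X - gfun_pow_series (k + 2) X)"
    by simp
  with sums_mult[OF gfun_pow_series_sums[OF assms(1)], of "2 / X" "Suc k"] show ?thesis
    by (rule sums_unique2[rotated])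
qed

lemma gfun_pow_series_eq_power:
  assumes "\<bar>X\<bar> < 1" "X \<noteq> 0"
  shows "gfun_pow_series k X = gfun X ^ k"
proof -
  \<comment> \<open>both sides satisfy \<open>u (k + 2) = u k - 2 / X * u (Suc k)\<close>\<close>
  have "gfun_pow_series k X = gfun X ^ k \<and> gfun_pow_series (Suc k) X = gfun X ^ Suc k"
  proof (induction k)
    case 0
    then show ?case
      using gfun_pow_series_0 gfun_pow_series_1 assms by simp
  next
    case (Suc k)
    have "gfun_pow_series (k + 2) X = gfun_pow_series k X - 2 / X * gfun_pow_series (Suc k) X"
      using gfun_pow_series_rec[OF assms, of k] by simp
    also have "\<dots> = gfun X ^ k * (1 - 2 / X * gfun X)"
      using Suc.IH by (simp add: algebra_simps)
    also have "\<dots> = gfun X ^ (k + 2)"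
      using gfun_square[OF assms(2)] by (simp add: power_add power2_eq_square)
    finally show ?case
      using Suc.IH by simp
  qed
  then show ?thesis ..
qed

definition gfun_pow_trunc :: "nat \<Rightarrow> nat \<Rightarrow> real \<Rightarrow> real" where
  "gfun_pow_trunc M k X = (\<Sum>j | k + 2*j < M. gfun_pow_coeff k j * X ^ (k + 2*j))"

lemma finite_weight_less: "finite {j :: nat. k + 2*j < M}"
  by (rule finite_subset[of _ "{..<M}"]) auto

lemma gfun_pow_trunc_eq_0: "M \<le> k \<Longrightarrow> gfun_pow_trunc M k X = 0"
  by (simp add: gfun_pow_trunc_def)

lemma gfun_pow_trunc_error:
  assumes X: "0 < X" "X \<le> 1/2" and "M \<ge> 1"
  shows "\<bar>gfun_pow_series k X - gfun_pow_trunc M k X\<bar> \<le> 2/3 * X ^ M"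
proof -
  define j0 where "j0 = (M - k + 1) div 2"
  have below: "{j. k + 2*j < M} = {..<j0}"
    unfolding j0_def by (simp add: set_eq_iff) presburger
  then have weight: "M \<le> k + 2*j0"
    by (metis lessThan_iff mem_Collect_eq not_le order_less_irrefl)
  define t where "t j = gfun_pow_coeff k j * X ^ (k + 2*j)" for j
  have "gfun_pow_trunc M k X = sum t {..<j0}"
    by (simp add: gfun_pow_trunc_def below t_def)
  moreover have "t sums gfun_pow_series k X"
    unfolding t_def using X by (intro gfun_pow_series_sums) simp
  ultimately have tail: "(\<lambda>i. t (i + j0)) sums (gfun_pow_series k X - gfun_pow_trunc M k X)"
    by (simp add: sums_iff_shift)
  \<comment> \<open>only every second power of \<open>X\<close> occurs in the tail\<close>
  have geom: "(\<lambda>i. 1/2 * X ^ M * (X^2) ^ i) sums (1/2 * X ^ M * (1 / (1 - X^2)))"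
    using X by (intro sums_mult geometric_sums) (simp add: abs_square_less_1)
  have "norm (t (i + j0)) \<le> 1/2 * X ^ M * (X^2) ^ i" for i
  proof -
    have "norm (t (i + j0)) = \<bar>gfun_pow_coeff k (i + j0)\<bar> * X ^ (k + 2*(i + j0))"
      using X by (simp add: t_def abs_mult)
    also have "\<dots> \<le> 1/2 * X ^ (k + 2*(i + j0))"
      using weight \<open>M \<ge> 1\<close> X by (intro mult_right_mono gfun_pow_coeff_abs_le_half) auto
    also have "X ^ (k + 2*(i + j0)) = X ^ (k + 2*j0) * (X^2) ^ i"
      by (simp add: power_add power_mult[symmetric] algebra_simps)
    also have "X ^ (k + 2*j0) \<le> X ^ M"
      using weight X by (intro power_decreasing) auto
    finally show ?thesis
      using X by (simp add: mult_right_mono)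
  qed
  then have "norm (gfun_pow_series k X - gfun_pow_trunc M k X) \<le> 1/2 * X ^ M * (1 / (1 - X^2))"
    by (rule norm_sums_le[OF tail geom])
  also have "\<dots> \<le> 1/2 * X ^ M * (4/3)"
  proof -
    have "X^2 \<le> (1/2)^2"
      using X by (intro power_mono) auto
    then show ?thesis
      using X by (intro mult_left_mono) (auto simp: field_simps)
  qed
  finally show ?thesis
    by simp
qed

lemma sum_weight_regroup:
  fixes h :: "nat \<Rightarrow> nat \<Rightarrow> 'a :: comm_monoid_add"
  shows "(\<Sum>k<M. \<Sum>j | k + 2*j < M. h k j) = (\<Sum>m<M. \<Sum>j\<le>m div 2. h (m - 2*j) j)"
proof -
  have "(\<Sum>k<M. \<Sum>j | k + 2*j < M. h k j) =
      (\<Sum>(k, j) \<in> Sigma {..<M} (\<lambda>k. {j. k + 2*j < M}). h k j)"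
    by (simp add: sum.Sigma finite_weight_less)
  also have "\<dots> = (\<Sum>(m, j) \<in> Sigma {..<M} (\<lambda>m. {..m div 2}). h (m - 2*j) j)"
    by (rule sum.reindex_bij_witness[where i = "\<lambda>(m, j). (m - 2*j, j)"
          and j = "\<lambda>(k, j). (k + 2*j, j)"]) auto
  also have "\<dots> = (\<Sum>m<M. \<Sum>j\<le>m div 2. h (m - 2*j) j)"
    by (simp add: sum.Sigma)
  finally show ?thesis .
qed

text \<open>The coefficient of \<open>X^m\<close> in \<open>exp (b * gfun X) = (\<Sum>k. b^k / fact k * gfun X ^ k)\<close>.\<close>

definition exp_gfun_coeff :: "real \<Rightarrow> nat \<Rightarrow> real" where
  "exp_gfun_coeff b m = (\<Sum>j\<le>m div 2. b ^ (m - 2*j) / fact (m - 2*j) * gfun_pow_coeff (m - 2*j) j)"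

lemma exp_gfun_approx:
  assumes X: "0 < X" "X \<le> 1/2" and "M \<ge> 1" "b \<ge> 0"
  shows "\<bar>exp (b * gfun X) - (\<Sum>m<M. exp_gfun_coeff b m * X ^ m)\<bar> \<le> 2/3 * X ^ M * exp b"
proof -
  have "(b * gfun X) ^ k /\<^sub>R fact k = b ^ k / fact k * gfun_pow_series k X" for k
  proof -
    have "gfun_pow_series k X = gfun X ^ k"
      using X by (intro gfun_pow_series_eq_power) auto
    then show ?thesis
      by (simp add: power_mult_distrib divide_inverse_commute)
  qed
  then have "(\<lambda>k. b ^ k / fact k * gfun_pow_series k X) sums exp (b * gfun X)"
    using exp_converges[of "b * gfun X"] by simp
  moreover have "(\<lambda>k. b ^ k / fact k * gfun_pow_trunc M k X) sums
      (\<Sum>k<M. b ^ k / fact k * gfun_pow_trunc M k X)"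
    by (rule sums_finite) (auto simp: gfun_pow_trunc_eq_0)
  ultimately have err: "(\<lambda>k. b ^ k / fact k * (gfun_pow_series k X - gfun_pow_trunc M k X)) sums
      (exp (b * gfun X) - (\<Sum>k<M. b ^ k / fact k * gfun_pow_trunc M k X))"
    unfolding right_diff_distrib by (rule sums_diff)
  have bound: "(\<lambda>k. b ^ k / fact k * (2/3 * X ^ M)) sums (exp b * (2/3 * X ^ M))"
    using exp_converges[of b] by (intro sums_mult2) (simp add: divide_inverse_commute)
  have "norm (b ^ k / fact k * (gfun_pow_series k X - gfun_pow_trunc M k X)) \<le>
      b ^ k / fact k * (2/3 * X ^ M)" for k
  proof -
    have "norm (b ^ k / fact k * (gfun_pow_series k X - gfun_pow_trunc M k X)) =
        b ^ k / fact k * \<bar>gfun_pow_series k X - gfun_pow_trunc M k X\<bar>"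
      using \<open>b \<ge> 0\<close> by (simp add: abs_mult)
    also have "\<dots> \<le> b ^ k / fact k * (2/3 * X ^ M)"
      using \<open>b \<ge> 0\<close> by (intro mult_left_mono gfun_pow_trunc_error X \<open>M \<ge> 1\<close>) simp
    finally show ?thesis .
  qed
  then have "norm (exp (b * gfun X) - (\<Sum>k<M. b ^ k / fact k * gfun_pow_trunc M k X)) \<le>
      exp b * (2/3 * X ^ M)"
    by (rule norm_sums_le[OF err bound])
  moreover have "(\<Sum>k<M. b ^ k / fact k * gfun_pow_trunc M k X) = (\<Sum>m<M. exp_gfun_coeff b m * X ^ m)"
    unfolding gfun_pow_trunc_def exp_gfun_coeff_def sum_distrib_left sum_distrib_right sum_weight_regroup
    by (intro sum.cong refl) (auto simp: power_add[symmetric])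
  ultimately show ?thesis
    by (simp add: mult_ac)
qed

lemma neg_one_power_diff: "v \<le> p \<Longrightarrow> (-1 :: real) ^ (p - v) = (-1) ^ p * (-1) ^ v"
  by (simp add: minus_one_power_iff)

lemma exp_gfun_term_even:
  assumes "0 < v" "v \<le> p"
  shows "b ^ (2 * v) / fact (2 * v) * gfun_pow_coeff (2 * v) (p - v) * X ^ (2*p) =
    (X^2) ^ p * fact (2*p - 1) / (-4) ^ p *
      ((- (b^2)) ^ v / (fact (2 * v - 1) * fact (v + p) * fact (p - v)))"
proof -
  have idx: "2 * v + 2 * (p - v) = 2 * p" "2 * v + (p - v) = v + p"
    using assms by simp_all
  have "b ^ (2 * v) / fact (2 * v) * gfun_pow_coeff (2 * v) (p - v) * X ^ (2*p) =
      (b^2) ^ v * (X^2) ^ p * (gfun_pow_coeff (2 * v) (p - v) / fact (2 * v))"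
    unfolding power_mult by (simp only: divide_inverse mult_ac)
  also have "gfun_pow_coeff (2 * v) (p - v) / fact (2 * v) =
      (-1) ^ (p - v) * fact (2*p - 1) / (2 ^ (2*p) * fact (2 * v - 1) * fact (p - v) * fact (v + p))"
    using gfun_pow_coeff_div_fact[of "2 * v" "p - v", unfolded idx] assms(1) by simp
  also have "(2 :: real) ^ (2*p) = 4 ^ p"
    by (simp add: power_mult)
  finally show ?thesis
    using assms(2)
    by (simp add: neg_one_power_diff power_minus[of "b^2"] power_minus[of 4] minus_one_power_iff mult_ac)
qed

lemma exp_gfun_term_odd:
  assumes "v \<le> p"
  shows "b ^ (2 * v + 1) / fact (2 * v + 1) * gfun_pow_coeff (2 * v + 1) (p - v) * X ^ (2*p + 1) =
    b * X / 2 * (X^2) ^ p * fact (2*p) / (-4) ^ p *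
      ((- (b^2)) ^ v / (fact (2 * v) * fact (p - v) * fact (v + p + 1)))"
proof -
  have idx: "2 * v + 1 + 2 * (p - v) = 2 * p + 1" "2 * v + 1 + (p - v) = v + p + 1"
    using assms by simp_all
  have "b ^ (2 * v + 1) / fact (2 * v + 1) * gfun_pow_coeff (2 * v + 1) (p - v) * X ^ (2*p + 1) =
      b * X * (b^2) ^ v * (X^2) ^ p * (gfun_pow_coeff (2 * v + 1) (p - v) / fact (2 * v + 1))"
    unfolding power_add power_mult by (simp only: divide_inverse mult_ac power_one_right)
  also have "gfun_pow_coeff (2 * v + 1) (p - v) / fact (2 * v + 1) =
      (-1) ^ (p - v) * fact (2*p) / (2 ^ (2*p + 1) * fact (2 * v) * fact (p - v) * fact (v + p + 1))"
    using gfun_pow_coeff_div_fact[of "2 * v + 1" "p - v", unfolded idx] by simp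
  also have "(2 :: real) ^ (2*p + 1) = 2 * 4 ^ p"
    by (simp add: power_mult)
  finally show ?thesis
    using assms by (simp add: neg_one_power_diff power_minus[of "b^2"] power_minus[of 4]
        minus_one_power_iff mult_ac del: fact_Suc)
qed

lemma exp_gfun_coeff_even:
  "exp_gfun_coeff b (2*p) = (\<Sum>v\<le>p. b ^ (2 * v) / fact (2 * v) * gfun_pow_coeff (2 * v) (p - v))"
proof -
  have "exp_gfun_coeff b (2*p) =
      (\<Sum>j=0..p. b ^ (2*p - 2*j) / fact (2*p - 2*j) * gfun_pow_coeff (2*p - 2*j) j)"
    by (simp add: exp_gfun_coeff_def atLeast0AtMost)
  also have "\<dots> = (\<Sum>v=0..p. b ^ (2 * v) / fact (2 * v) * gfun_pow_coeff (2 * v) (p - v))"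
    by (subst sum.atLeastAtMost_rev) (intro sum.cong refl, simp add: right_diff_distrib')
  finally show ?thesis
    by (simp add: atLeast0AtMost)
qed

lemma exp_gfun_coeff_odd:
  "exp_gfun_coeff b (2*p + 1) =
    (\<Sum>v\<le>p. b ^ (2 * v + 1) / fact (2 * v + 1) * gfun_pow_coeff (2 * v + 1) (p - v))"
proof -
  have "exp_gfun_coeff b (2*p + 1) =
      (\<Sum>j=0..p. b ^ (2*p + 1 - 2*j) / fact (2*p + 1 - 2*j) * gfun_pow_coeff (2*p + 1 - 2*j) j)"
    by (simp add: exp_gfun_coeff_def atLeast0AtMost)
  also have "\<dots> =
      (\<Sum>v=0..p. b ^ (2 * v + 1) / fact (2 * v + 1) * gfun_pow_coeff (2 * v + 1) (p - v))"
    by (subst sum.atLeastAtMost_rev) (intro sum.cong refl, simp add: right_diff_distrib')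
  finally show ?thesis
    by (simp add: atLeast0AtMost)
qed

lemma exp_gfun_coeff_even_eq_e1:
  fixes s :: nat and n :: real
  assumes "n > 0"
  shows "exp_gfun_coeff (2 * pi * sqrt (s / 3)) (2*p) * sqrt (s / n) ^ (2*p) = e1 s p / n ^ p"
proof (cases "p = 0")
  case True
  then show ?thesis
    by (simp add: exp_gfun_coeff_def gfun_pow_coeff_def e1_def)
next
  case False
  define b X where "b = 2 * pi * sqrt (s / 3)" and "X = sqrt (s / n)"
  have b2: "- (b^2) = -4 * pi^2 * s / 3"
    by (simp add: b_def power_mult_distrib)
  have X2: "(X^2) ^ p = s ^ p / n ^ p"
    using assms by (simp add: X_def power_divide)
  have "exp_gfun_coeff b (2*p) * X ^ (2*p) =
      (\<Sum>v=0..p. b ^ (2 * v) / fact (2 * v) * gfun_pow_coeff (2 * v) (p - v) * X ^ (2*p))"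
    by (simp add: exp_gfun_coeff_even sum_distrib_right atMost_atLeast0)
  also have "\<dots> =
      (\<Sum>v=1..p. b ^ (2 * v) / fact (2 * v) * gfun_pow_coeff (2 * v) (p - v) * X ^ (2*p))"
    using False by (subst sum.atLeast_Suc_atMost) (simp_all add: gfun_pow_coeff_0_left)
  also have "\<dots> = (\<Sum>v=1..p. (X^2) ^ p * fact (2*p - 1) / (-4) ^ p *
      ((- (b^2)) ^ v / (fact (2 * v - 1) * fact (v + p) * fact (p - v))))"
    by (intro sum.cong refl exp_gfun_term_even) auto
  also have "\<dots> = e1 s p / n ^ p"
    unfolding X2 b2 using False by (simp add: e1_def sum_distrib_left sum_divide_distrib mult_ac)
  finally show ?thesis
    by (simp add: b_def X_def)
qed

lemma exp_gfun_coeff_odd_eq_o1: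
  fixes s :: nat and n :: real
  assumes "n > 0"
  shows "exp_gfun_coeff (2 * pi * sqrt (s / 3)) (2*p + 1) * sqrt (s / n) ^ (2*p + 1) =
    o1 s p / (n ^ p * sqrt n)"
proof -
  define b X where "b = 2 * pi * sqrt (s / 3)" and "X = sqrt (s / n)"
  have b2: "- (b^2) = -4 * pi^2 * s / 3"
    by (simp add: b_def power_mult_distrib)
  have X2: "(X^2) ^ p = s ^ p / n ^ p"
    using assms by (simp add: X_def power_divide)
  have bX: "b * X / 2 = pi * s / (sqrt 3 * sqrt n)"
    using assms by (simp add: b_def X_def real_sqrt_divide)
  have "exp_gfun_coeff b (2*p + 1) * X ^ (2*p + 1) =
      (\<Sum>v\<le>p. b ^ (2 * v + 1) / fact (2 * v + 1) * gfun_pow_coeff (2 * v + 1) (p - v) *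
        X ^ (2*p + 1))"
    unfolding exp_gfun_coeff_odd by (simp only: sum_distrib_right)
  also have "\<dots> = (\<Sum>v\<le>p. b * X / 2 * (X^2) ^ p * fact (2*p) / (-4) ^ p *
      ((- (b^2)) ^ v / (fact (2 * v) * fact (p - v) * fact (v + p + 1))))"
    by (intro sum.cong refl exp_gfun_term_odd) simp
  also have "\<dots> = o1 s p / (n ^ p * sqrt n)"
    unfolding bX X2 b2 by (simp add: o1_def sum_distrib_left sum_divide_distrib atMost_atLeast0 mult_ac)
  finally show ?thesis
    by (simp add: b_def X_def)
qed

lemma exp_gfun_coeff_eq_d1:
  fixes s :: nat and n :: real
  assumes "n > 0"
  shows "exp_gfun_coeff (2 * pi * sqrt (s / 3)) m * sqrt (s / n) ^ m = d1 s m / n powr (m / 2)"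
proof (cases "even m")
  case True
  then obtain p where "m = 2*p"
    by blast
  with assms show ?thesis
    by (simp add: exp_gfun_coeff_even_eq_e1 d1_def powr_realpow)
next
  case False
  then obtain p where m: "m = 2*p + 1"
    by (blast elim: oddE)
  have "n ^ p * sqrt n = n powr (m / 2)"
    using assms by (simp add: m powr_add powr_realpow powr_half_sqrt add_divide_distrib)
  moreover have "d1 s m = o1 s p"
    using False by (simp add: d1_def m)
  ultimately show ?thesis
    using exp_gfun_coeff_odd_eq_o1[OF assms, of s p] unfolding m[symmetric] by simp
qed

lemma sqrt_div_le_half:
  fixes s n :: real
  assumes "1 \<le> s" "4 * s^2 \<le> n"
  shows "sqrt (s / n) \<le> 1/2"
proof -
  have "s \<le> s^2"
    using assms(1) by (simp add: power2_eq_square)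
  then have "s / n \<le> 1/4"
    using assms by (simp add: field_simps)
  then have "sqrt (s / n) \<le> sqrt (1/4)"
    by (rule real_sqrt_le_mono)
  then show ?thesis
    by (simp add: real_sqrt_divide)
qed

lemma exp_remainder_le:
  fixes s :: nat and n b :: real
  assumes "s \<ge> 1" "n > 0"
  shows "2/3 * sqrt (s / n) ^ M * exp b \<le> 3/2 * s powr ((real M + 1) / 2) * cosh b * n powr (- (M / 2))"
proof -
  have cosh: "exp b \<le> 2 * cosh b" "0 \<le> cosh b"
    by (simp_all add: cosh_def)
  have "sqrt (s / n) ^ M = s powr (M / 2) * n powr (- (M / 2))"
    using assms by (simp add: powr_half_sqrt[symmetric] powr_realpow[symmetric] powr_powr
        powr_divide powr_minus_divide)
  then have "2/3 * sqrt (s / n) ^ M * exp b \<le> 2/3 * (s powr (M / 2) * n powr (- (M / 2))) * (2 * cosh b)"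
    using cosh by (simp only:) (intro mult_left_mono; simp)
  also have "\<dots> = 4/3 * s powr (M / 2) * cosh b * n powr (- (M / 2))"
    by simp
  also have "\<dots> \<le> 3/2 * s powr ((real M + 1) / 2) * cosh b * n powr (- (M / 2))"
  proof -
    have "s powr (M / 2) \<le> s powr ((real M + 1) / 2)"
      using assms by (intro powr_mono) auto
    then show ?thesis
      using cosh by (intro mult_right_mono mult_mono) auto
  qed
  finally show ?thesis .
qed

theorem lemma5p1:
  fixes N s n :: nat
  assumes "N \<ge> 3" and "s \<ge> 1" and "real n \<ge> 4 * real s ^ 2"
  shows "\<exists>E::real.
    \<bar>E\<bar> \<le> 1.5 * real s powr ((real N + 3) / 2) * cosh (2 * pi * sqrt (real s / 3))
                * real n powr (- ((real N + 2) / 2)) \<and>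
    exp (2 * pi * sqrt ((real n + real s) / 3)) =
      exp (2 * pi * sqrt (real n / 3)) *
        ((\<Sum>m=0..N+1. d1 s m / real n powr (real m / 2)) + E)"
proof -
  define b X where "b = 2 * pi * sqrt (s / 3)" and "X = sqrt (s / n)"
  have "1 \<le> real s ^ 2"
    using assms(2) by simp
  then have n: "real n > 0"
    using assms(3) by linarith
  have X: "0 < X" "X \<le> 1/2"
    using assms(2) n sqrt_div_le_half[of s n] assms(3) by (simp_all add: X_def)
  define E where "E = exp (b * gfun X) - (\<Sum>m<N + 2. exp_gfun_coeff b m * X ^ m)"
  have "\<bar>E\<bar> \<le> 2/3 * X ^ (N + 2) * exp b"
    unfolding E_def using assms(2) by (intro exp_gfun_approx X) (auto simp: b_def)
  also have "\<dots> \<le> 1.5 * real s powr ((real N + 3) / 2) * cosh b * real n powr (- ((real N + 2) / 2))"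
    using exp_remainder_le[of s n "N + 2" b] assms(2) n by (simp add: X_def add_ac)
  moreover have "exp (2 * pi * sqrt ((real n + real s) / 3)) =
      exp (2 * pi * sqrt (real n / 3)) * exp (b * gfun X)"
    using sqrt_add_eq_gfun[of n s] n assms(2)
    by (simp add: b_def X_def real_sqrt_divide field_simps flip: exp_add)
  moreover have "(\<Sum>m<N + 2. exp_gfun_coeff b m * X ^ m) =
      (\<Sum>m=0..N+1. d1 s m / real n powr (real m / 2))"
    unfolding b_def X_def using n
    by (simp add: exp_gfun_coeff_eq_d1 atLeast0AtMost lessThan_Suc_atMost[symmetric])
  ultimately show ?thesis
    by (intro exI[of _ E]) (simp add: E_def b_def)
qed

end
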